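(* Let $\mathcal P_Y$ be the $\mathbb Q(b)$-span of the monomials $p_\lambda$ and $y_ip_\lambda$ ($i\ge0$, $\lambda$ a partition). Then, as operators on $\mathcal P_Y$: $$[D_\alpha+D'_\alpha,\Lambda_Y]=0,\qquad [D_\alpha+D'_\alpha,Y_+]=Y_+\Lambda_Y,\qquad \Theta_Y(D_\alpha+D'_\alpha)=D_\alpha\Theta_Y.$$
   Context: $b$ indeterminate, $\alpha=1+b$, $p_\lambda=\prod_ip_{\lambda_i}$. Operators: $\Theta_Y=\sum_{i\ge1}p_i\frac{\partial}{\partial y_i}$; $Y_+=\sum_{i\ge0}y_{i+1}\frac{\partial}{\partial y_i}$; $\Lambda_Y=(1+b)\sum_{i,j\ge1}iy_{i+j-1}\frac{\partial^2}{\partial p_i\partial y_{j-1}}+\sum_{i,j\ge1}y_{i-1}p_j\frac{\partial}{\partial y_{i+j-1}}+b\sum_{i\ge0}iy_i\frac{\partial}{\partial y_i}$; $D_\alpha=\frac12\big((1+b)\sum_{i,j\ge1}ijp_{i+j}\frac{\partial^2}{\partial p_i\partial p_j}+\sum_{i,j\ge1}(i+j)p_ip_j\frac{\partial}{\partial p_{i+j}}+b\sum_{i\ge1}i(i-1)p_i\frac{\partial}{\partial p_i}\big)$; $D'_\alpha=\frac12\big((1+b)\sum_{i,j\ge1}2ij\,y_{i+j}\frac{\partial^2}{\partial y_i\partial p_j}+\sum_{i,j\ge1}2i\,y_ip_j\frac{\partial}{\partial y_{i+j}}+b\sum_{i\ge1}i(i-1)y_i\frac{\partial}{\partial y_i}\big)$.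 $[A,B]=AB-BA$. *)

theory Defs
  imports "HOL-Library.Poly_Mapping" "HOL-Computational_Algebra.Polynomial"
          "HOL-Computational_Algebra.Fraction_Field"
begin

type_synonym coef = "rat poly fract"

definition bb :: coef where "bb = Fract [:0, 1:] 1"

datatype var = P nat | Y nat

type_synonym mpoly = "(var \<Rightarrow>\<^sub>0 nat) \<Rightarrow>\<^sub>0 coef"

definition var_poly :: "var \<Rightarrow> mpoly" where
  "var_poly v = Poly_Mapping.single (Poly_Mapping.single v 1) 1"

abbreviation pp :: "nat \<Rightarrow> mpoly" where "pp i \<equiv> var_poly (P i)"
abbreviation yy :: "nat \<Rightarrow> mpoly" where "yy i \<equiv> var_poly (Y i)"

definition const :: "coef \<Rightarrow> mpoly" where
  "const c = Poly_Mapping.single 0 c"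

definition pderiv_var :: "var \<Rightarrow> mpoly \<Rightarrow> mpoly" where
  "pderiv_var v f = (\<Sum>m\<in>Poly_Mapping.keys f.
      Poly_Mapping.single (m - Poly_Mapping.single v (1::nat))
        (of_nat (Poly_Mapping.lookup m v) * Poly_Mapping.lookup f m))"

abbreviation dP :: "nat \<Rightarrow> mpoly \<Rightarrow> mpoly" where "dP i \<equiv> pderiv_var (P i)"
abbreviation dY :: "nat \<Rightarrow> mpoly \<Rightarrow> mpoly" where "dY i \<equiv> pderiv_var (Y i)"

fun var_idx :: "var \<Rightarrow> nat" where
  "var_idx (P i) = i" | "var_idx (Y i) = i"

text \<open>The infinite sums defining the
  operators below are locally finite: all terms with an index beyond N f + 1 vanish on f,
  so summing over indices up to N f + 1 gives the operator exactly.\<close>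
definition bnd :: "mpoly \<Rightarrow> nat" where
  "bnd f = Max (insert 0 (var_idx ` (\<Union>m\<in>Poly_Mapping.keys f. Poly_Mapping.keys m))) + 1"

definition Theta_Y :: "mpoly \<Rightarrow> mpoly" where
  "Theta_Y f = (\<Sum>i\<in>{1..bnd f}. pp i * dY i f)"

definition Y_plus :: "mpoly \<Rightarrow> mpoly" where
  "Y_plus f = (\<Sum>i\<in>{0..bnd f}. yy (i+1) * dY i f)"

definition Lambda_Y :: "mpoly \<Rightarrow> mpoly" where
  "Lambda_Y f =
     const (1 + bb) * (\<Sum>i\<in>{1..bnd f}. \<Sum>j\<in>{1..bnd f}.
         of_nat i * yy (i+j-1) * dP i (dY (j-1) f))
   + (\<Sum>i\<in>{1..bnd f}. \<Sum>j\<in>{1..bnd f}. yy (i-1) * pp j * dY (i+j-1) f)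
   + const bb * (\<Sum>i\<in>{0..bnd f}. of_nat i * yy i * dY i f)"

definition D_alpha :: "mpoly \<Rightarrow> mpoly" where
  "D_alpha f = const (1/2) *
     ( const (1 + bb) * (\<Sum>i\<in>{1..bnd f}. \<Sum>j\<in>{1..bnd f}.
           of_nat (i*j) * pp (i+j) * dP i (dP j f))
     + (\<Sum>i\<in>{1..bnd f}. \<Sum>j\<in>{1..bnd f}. of_nat (i+j) * pp i * pp j * dP (i+j) f)
     + const bb * (\<Sum>i\<in>{1..bnd f}. of_nat (i*(i-1)) * pp i * dP i f))"

definition D'_alpha :: "mpoly \<Rightarrow> mpoly" where
  "D'_alpha f = const (1/2) *
     ( const (1 + bb) * (\<Sum>i\<in>{1..bnd f}. \<Sum>j\<in>{1..bnd f}.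
           of_nat (2*i*j) * yy (i+j) * dY i (dP j f))
     + (\<Sum>i\<in>{1..bnd f}. \<Sum>j\<in>{1..bnd f}. of_nat (2*i) * yy i * pp j * dY (i+j) f)
     + const bb * (\<Sum>i\<in>{1..bnd f}. of_nat (i*(i-1)) * yy i * dY i f))"

text \<open>The space P_Y: Q(b)-span of the monomials p_lambda and y_i p_lambda, i.e.
  polynomials all of whose monomials avoid p_0 and have total y-degree at most 1.\<close>
definition PY :: "mpoly set" where
  "PY = {f. \<forall>m\<in>Poly_Mapping.keys f. Poly_Mapping.lookup m (P 0) = 0 \<and>
                      (\<Sum>v\<in>Poly_Mapping.keys m \<inter> range Y. Poly_Mapping.lookup m v) \<le> 1}"

definition commutator :: "(mpoly \<Rightarrow> mpoly) \<Rightarrow> (mpoly \<Rightarrow> mpoly) \<Rightarrow> mpoly \<Rightarrow> mpoly" where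
  "commutator A B = (\<lambda>f. A (B f) - B (A f))"

end

theory Submission
  imports Defs
begin

(* All operators involved are linear, and P_Y is spanned by the y-free polynomials g and the
   products y_k g with g y-free.  On y-free g the identities are immediate: Lambda_Y, Y_+,
   Theta_Y and D'_alpha kill g, and D_alpha keeps it y-free.  On the y-linear part, both
   E = 2 (D_alpha + D'_alpha) and Lambda_Y act as matrices, E (y_k g) = sum_m y_m E_mk g and
   Lambda_Y (y_k g) = sum_m y_m L_mk g, whose entries are explicit operators on y-free
   polynomials built from p_d, d/dp_d and D_alpha.  The first identity becomes the matrix
   identity sum_n E_mn L_nk = sum_n L_mn E_nk.  Comparing terms n by n, the discrepancies come
   from the commutators of D_alpha with p_d and with d/dp_d, and they cancel after symmetrising
   the inner sums under i <-> d - i.  The second identity follows from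
   E_(m+1)(k+1) = E_mk + 2 L_mk, the third from Theta_Y (y_m h) = p_m h.  The infinite sums
   are handled through truncations beyond an index bound where all terms vanish. *)

section \<open>Index manipulations in finite sums\<close>

lemma mult_if_zero: "x * (if b then y else 0) = (if b then x * y else (0::'a::mult_zero))"
  by simp

lemma sum_if_unique:
  assumes "finite A" "\<And>j. j \<in> A \<Longrightarrow> Q j \<longleftrightarrow> j = a"
  shows "(\<Sum>j\<in>A. if Q j then F j else 0) = (if a \<in> A then F a else 0)"
  using assms by (simp add: sum.delta cong: sum.cong)

lemma sum_atLeastAtMost_split_at:
  fixes k N :: nat assumes "k \<le> N"
  shows "(\<Sum>m\<in>{0..N}. F m) = (\<Sum>m\<in>{0..<k}. F m) + F k + (\<Sum>m\<in>{Suc k..N}. F m)"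
proof -
  have "{0..N} = {0..<k} \<union> ({k} \<union> {Suc k..N})" using assms by auto
  moreover have "sum F ({0..<k} \<union> {Suc k..N}) = sum F {0..<k} + sum F {Suc k..N}"
    by (rule sum.union_disjoint) auto
  ultimately show ?thesis by (simp add: add_ac)
qed

lemma sum_atLeastAtMost_Suc_shift:
  fixes k N :: nat assumes "k \<le> N"
  shows "(\<Sum>m\<in>{Suc k..N}. F m) = (\<Sum>j\<in>{1..N-k}. F (j + k))"
proof -
  have "{Suc k..N} = {1+k..(N-k)+k}" using assms by auto
  then show ?thesis by (simp only: sum.shift_bounds_cl_nat_ivl)
qed

lemma sum_lessThan_shift_up:
  fixes k :: nat
  shows "(\<Sum>m\<in>{0..<k}. F m) = (\<Sum>i\<in>{1..k}. F (i - 1))"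
  by (induction k) (simp_all add: atLeastLessThanSuc add.commute)

lemma sum_atLeastLessThan_drop_zero:
  fixes k :: nat assumes "0 < k \<Longrightarrow> F 0 = 0"
  shows "(\<Sum>i\<in>{0..<k}. F i) = (\<Sum>i\<in>{1..<k}. F i)"
proof (cases k)
  case (Suc k')
  then have "{0..<k} = insert 0 {1..<k}" by auto
  then show ?thesis using assms Suc by simp
qed simp

lemma sum_if_less:
  fixes k N :: nat assumes "k \<le> Suc N"
  shows "(\<Sum>i\<in>{1..N}. if i < k then F i else 0) = (\<Sum>i\<in>{1..<k}. F i)"
proof -
  have "{i \<in> {1..N}. i < k} = {1..<k}" using assms by auto
  then show ?thesis by (simp add: sum.inter_filter[symmetric])
qed

lemma double_sum_antidiagonal:
  fixes d N :: nat
  assumes "d \<le> Suc N" and Q: "\<And>i j. 1 \<le> i \<Longrightarrow> 1 \<le> j \<Longrightarrow> Q i j \<longleftrightarrow> i + j = d"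
  shows "(\<Sum>i\<in>{1..N}. \<Sum>j\<in>{1..N}. if Q i j then F i j else 0) = (\<Sum>i\<in>{1..<d}. F i (d - i))"
proof -
  have "(\<Sum>j\<in>{1..N}. if Q i j then F i j else 0) = (if i < d then F i (d - i) else 0)"
    if "i \<in> {1..N}" for i
    using that assms by (subst sum_if_unique[where a = "d - i"]) auto
  then have "(\<Sum>i\<in>{1..N}. \<Sum>j\<in>{1..N}. if Q i j then F i j else 0)
      = (\<Sum>i\<in>{1..N}. if i < d then F i (d - i) else 0)"
    by (rule sum.cong[OF refl])
  also have "\<dots> = (\<Sum>i\<in>{1..<d}. F i (d - i))"
    by (rule sum_if_less[OF assms(1)])
  finally show ?thesis .
qed

lemma sum_atLeastLessThan_reflect:
  fixes d :: nat
  shows "(\<Sum>i\<in>{1..<d}. F i) = (\<Sum>i\<in>{1..<d}. F (d - i))"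
proof (cases d)
  case (Suc d')
  then have "{1..<d} = {1..d'}" by auto
  then show ?thesis using sum.atLeastAtMost_rev[of F 1 d'] Suc by simp
qed simp

lemma sum_symmetrize:
  fixes d :: nat and X :: "nat \<Rightarrow> 'a::comm_ring_1"
  assumes X: "\<And>i. 0 < i \<Longrightarrow> i < d \<Longrightarrow> X (d - i) = X i"
    and w: "\<And>i. 0 < i \<Longrightarrow> i < d \<Longrightarrow> w i + w (d - i) = c * v i"
  shows "2 * (\<Sum>i\<in>{1..<d}. of_nat (w i) * X i) = of_nat c * (\<Sum>i\<in>{1..<d}. of_nat (v i) * X i)"
proof -
  have "(\<Sum>i\<in>{1..<d}. of_nat (w i) * X i) = (\<Sum>i\<in>{1..<d}. of_nat (w (d - i)) * X (d - i))"
    by (rule sum_atLeastLessThan_reflect)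
  also have "\<dots> = (\<Sum>i\<in>{1..<d}. of_nat (w (d - i)) * X i)"
    using X by (intro sum.cong) auto
  finally have "(\<Sum>i\<in>{1..<d}. of_nat (w i) * X i) = (\<Sum>i\<in>{1..<d}. of_nat (w (d - i)) * X i)" .
  then have "2 * (\<Sum>i\<in>{1..<d}. of_nat (w i) * X i)
      = (\<Sum>i\<in>{1..<d}. of_nat (w i) * X i + of_nat (w (d - i)) * X i)"
    by (simp only: mult_2 sum.distrib)
  also have "\<dots> = (\<Sum>i\<in>{1..<d}. of_nat c * (of_nat (v i) * X i))"
  proof (rule sum.cong[OF refl])
    fix i assume "i \<in> {1..<d}"
    then have "w i + w (d - i) = c * v i" using w by simp
    then have "(of_nat (w i) + of_nat (w (d - i)) :: 'a) = of_nat c * of_nat (v i)"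
      by (metis of_nat_add of_nat_mult)
    then show "of_nat (w i) * X i + of_nat (w (d - i)) * X i = of_nat c * (of_nat (v i) * X i)"
      by (simp add: distrib_right[symmetric] mult.assoc)
  qed
  finally show ?thesis by (simp add: sum_distrib_left)
qed

lemma double_sum_if_fst_eq:
  assumes "finite A" "d \<in> A"
  shows "(\<Sum>i\<in>A. \<Sum>j\<in>B. if i = d then F i j else 0) = (\<Sum>j\<in>B. F d j)"
  using assms by (subst sum.swap) (simp add: sum.delta')

lemma sum_atLeastAtMost_split_at_two:
  fixes k d N :: nat assumes "0 < d" "k + d \<le> N"
  shows "(\<Sum>n\<in>{0..N}. F n) = (\<Sum>n\<in>{0..<k}. F n) + F k + (\<Sum>i\<in>{1..<d}. F (k + i)) + F (k + d)
     + (\<Sum>j\<in>{1..N-(k+d)}. F (k + d + j))"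
proof -
  have "(\<Sum>n\<in>{0..<k+d}. F n) = (\<Sum>n\<in>{0..<k}. F n) + F k + (\<Sum>n\<in>{Suc k..<k+d}. F n)"
    using assms sum.atLeastLessThan_concat[of 0 k "k+d" F] sum.atLeast_Suc_lessThan[of k "k+d" F]
    by (simp add: add.assoc)
  then have "(\<Sum>n\<in>{0..N}. F n) = (\<Sum>n\<in>{0..<k}. F n) + F k + (\<Sum>n\<in>{Suc k..<k+d}. F n)
      + F (k + d) + (\<Sum>n\<in>{Suc (k+d)..N}. F n)"
    using sum_atLeastAtMost_split_at[OF assms(2), of F] by simp
  moreover have "(\<Sum>n\<in>{Suc k..<k+d}. F n) = (\<Sum>i\<in>{1..<d}. F (k + i))"
    using sum.shift_bounds_nat_ivl[of F 1 k d] by (simp add: add.commute)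
  moreover have "(\<Sum>n\<in>{Suc (k+d)..N}. F n) = (\<Sum>j\<in>{1..N-(k+d)}. F (k + d + j))"
    using sum_atLeastAtMost_Suc_shift[OF assms(2), of F] by (simp add: add.commute)
  ultimately show ?thesis by simp
qed

section \<open>Partial derivatives\<close>

abbreviation unit_mon :: "var \<Rightarrow> var \<Rightarrow>\<^sub>0 nat" where
  "unit_mon v \<equiv> Poly_Mapping.single v 1"

lemma poly_mapping_sum_single:
  "(f::'a \<Rightarrow>\<^sub>0 'b::comm_monoid_add) =
     (\<Sum>m\<in>Poly_Mapping.keys f. Poly_Mapping.single m (Poly_Mapping.lookup f m))"
  by (rule poly_mapping_eqI) (simp add: lookup_sum lookup_single when_def sum.delta in_keys_iff)

lemma poly_mapping_induct [case_names zero single add]: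
  fixes f :: "'a \<Rightarrow>\<^sub>0 'b::comm_monoid_add"
  assumes "Q 0" "\<And>m c. Q (Poly_Mapping.single m c)" "\<And>f g. Q f \<Longrightarrow> Q g \<Longrightarrow> Q (f + g)"
  shows "Q f"
proof -
  have "Q (\<Sum>m\<in>A. Poly_Mapping.single m (Poly_Mapping.lookup f m))" if "finite A" for A
    using that by (induction A rule: finite_induct) (auto intro: assms)
  then show ?thesis by (subst poly_mapping_sum_single) simp
qed

lemma lookup_const_mult: "Poly_Mapping.lookup (const c * f) m = c * Poly_Mapping.lookup f m"
  unfolding const_def mult_map_scale_conv_mult[symmetric] by (simp add: map.rep_eq when_def)

lemma const_add: "const (a + b) = const a + const b"
  by (simp add: const_def single_add)

lemma const_mult: "const (a * b) = const a * const b"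
  by (simp add: const_def mult_single)

lemma const_one [simp]: "const 1 = 1"
  by (simp add: const_def)

lemma of_nat_eq_const: "(of_nat n :: mpoly) = const (of_nat n)"
  by (simp add: const_def)

lemma lookup_pderiv_var:
  "Poly_Mapping.lookup (pderiv_var v f) m
     = of_nat (Poly_Mapping.lookup m v + 1) * Poly_Mapping.lookup f (m + unit_mon v)"
proof -
  have "Poly_Mapping.lookup (pderiv_var v f) m =
     (\<Sum>k\<in>Poly_Mapping.keys f. if k = m + unit_mon v then
         of_nat (Poly_Mapping.lookup k v) * Poly_Mapping.lookup f k else 0)"
    unfolding pderiv_var_def lookup_sum lookup_single
  proof (rule sum.cong[OF refl])
    fix k
    show "(of_nat (Poly_Mapping.lookup k v) * Poly_Mapping.lookup f k when k - unit_mon v = m)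
      = (if k = m + unit_mon v then of_nat (Poly_Mapping.lookup k v) * Poly_Mapping.lookup f k else 0)"
    proof (cases "Poly_Mapping.lookup k v = 0")
      case True
      then have "k \<noteq> m + unit_mon v" by (auto simp: lookup_add)
      then show ?thesis using True by (simp add: when_def)
    next
      case False
      then have "(k - unit_mon v = m) = (k = m + unit_mon v)"
        by (auto simp: poly_mapping_eq_iff lookup_add lookup_minus fun_eq_iff lookup_single when_def)
      then show ?thesis by (simp add: when_def)
    qed
  qed
  also have "\<dots> = of_nat (Poly_Mapping.lookup m v + 1) * Poly_Mapping.lookup f (m + unit_mon v)"
    by (simp add: sum.delta lookup_add in_keys_iff)
  finally show ?thesis .
qed

lemma pderiv_var_add: "pderiv_var v (f + g) = pderiv_var v f + pderiv_var v g"
  by (rule poly_mapping_eqI) (simp add: lookup_pderiv_var lookup_add distrib_left)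

lemma pderiv_var_zero [simp]: "pderiv_var v 0 = 0"
  by (rule poly_mapping_eqI) (simp add: lookup_pderiv_var)

lemma pderiv_var_sum: "pderiv_var v (\<Sum>i\<in>A. F i) = (\<Sum>i\<in>A. pderiv_var v (F i))"
  by (induction A rule: infinite_finite_induct) (auto simp: pderiv_var_add)

lemma pderiv_var_const_mult: "pderiv_var v (const c * f) = const c * pderiv_var v f"
  by (rule poly_mapping_eqI) (simp add: lookup_pderiv_var lookup_const_mult)

lemma pderiv_var_single:
  "pderiv_var v (Poly_Mapping.single m c) =
     Poly_Mapping.single (m - unit_mon v) (of_nat (Poly_Mapping.lookup m v) * c)"
proof (rule poly_mapping_eqI)
  fix k
  show "Poly_Mapping.lookup (pderiv_var v (Poly_Mapping.single m c)) k =
    Poly_Mapping.lookup (Poly_Mapping.single (m - unit_mon v) (of_nat (Poly_Mapping.lookup m v) * c)) k"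
  proof (cases "Poly_Mapping.lookup m v = 0")
    case True
    then have "k + unit_mon v \<noteq> m" by (auto simp: lookup_add)
    then show ?thesis using True by (simp add: lookup_pderiv_var lookup_single when_def)
  next
    case False
    then have "k + unit_mon v = m \<longleftrightarrow> m - unit_mon v = k"
      by (auto simp: poly_mapping_eq_iff lookup_add lookup_minus fun_eq_iff lookup_single when_def)
    moreover have "m - unit_mon v = k \<Longrightarrow> Poly_Mapping.lookup k v + 1 = Poly_Mapping.lookup m v"
      using False by (auto simp: lookup_minus)
    ultimately show ?thesis
      by (cases "m - unit_mon v = k") (simp_all add: lookup_pderiv_var lookup_single when_def)
  qed
qed

lemma pderiv_var_mult_single:
  "pderiv_var v (Poly_Mapping.single a c * Poly_Mapping.single b d) =
     pderiv_var v (Poly_Mapping.single a c) * Poly_Mapping.single b d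
     + Poly_Mapping.single a c * pderiv_var v (Poly_Mapping.single b d)"
proof -
  have a: "0 < Poly_Mapping.lookup a v \<Longrightarrow> b + (a - unit_mon v) = a + b - unit_mon v"
   and b: "0 < Poly_Mapping.lookup b v \<Longrightarrow> a + (b - unit_mon v) = a + b - unit_mon v"
    by (rule poly_mapping_eqI; auto simp: lookup_add lookup_minus lookup_single when_def)+
  show ?thesis
    by (cases "Poly_Mapping.lookup a v = 0"; cases "Poly_Mapping.lookup b v = 0")
       (simp_all add: mult_single pderiv_var_single lookup_add a[simplified] b[simplified] single_add[symmetric]
          algebra_simps)
qed

lemma pderiv_var_mult: "pderiv_var v (f * g) = pderiv_var v f * g + f * pderiv_var v g"
proof (induction f rule: poly_mapping_induct)
  case (single m c)
  show ?case
    by (induction g rule: poly_mapping_induct)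
       (simp_all add: pderiv_var_mult_single distrib_left pderiv_var_add algebra_simps)
qed (simp_all add: distrib_right pderiv_var_add)

lemma pderiv_var_var_poly: "pderiv_var v (var_poly w) = (if v = w then 1 else 0)"
  by (simp add: var_poly_def pderiv_var_single lookup_single when_def)

lemma pderiv_var_const [simp]: "pderiv_var v (const c) = 0"
  by (simp add: const_def pderiv_var_single)

lemma pderiv_var_one [simp]: "pderiv_var v 1 = 0"
  using pderiv_var_const[of v 1] by simp

lemma pderiv_var_of_nat [simp]: "pderiv_var v (of_nat n) = 0"
  by (simp add: of_nat_eq_const)

lemma pderiv_var_pp [simp]: "pderiv_var v (pp i) = (if v = P i then 1 else 0)"
  by (simp add: pderiv_var_var_poly)

lemma pderiv_var_yy [simp]: "pderiv_var v (yy i) = (if v = Y i then 1 else 0)"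
  by (simp add: pderiv_var_var_poly)

lemma pderiv_var_commute: "pderiv_var v (pderiv_var w f) = pderiv_var w (pderiv_var v f)"
proof (rule poly_mapping_eqI)
  fix m
  have "m + unit_mon v + unit_mon w = m + unit_mon w + unit_mon v"
    by (simp add: add_ac)
  then show "Poly_Mapping.lookup (pderiv_var v (pderiv_var w f)) m =
      Poly_Mapping.lookup (pderiv_var w (pderiv_var v f)) m"
    by (cases "v = w") (simp_all add: lookup_pderiv_var lookup_add lookup_single)
qed

section \<open>Bounds on variable indices\<close>

definition vars_below :: "nat \<Rightarrow> mpoly \<Rightarrow> bool" where
  "vars_below N f \<longleftrightarrow> (\<forall>m\<in>Poly_Mapping.keys f. \<forall>v\<in>Poly_Mapping.keys m. var_idx v < N)"

lemma one_le_bnd: "1 \<le> bnd f"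
  by (simp add: bnd_def)

lemma vars_below_bnd: "vars_below (bnd f) f"
  unfolding vars_below_def bnd_def
proof (intro ballI)
  fix m v assume "m \<in> Poly_Mapping.keys f" "v \<in> Poly_Mapping.keys m"
  then have "var_idx v \<le> Max (insert 0 (var_idx ` (\<Union>m\<in>Poly_Mapping.keys f. Poly_Mapping.keys m)))"
    by (intro Max_ge) auto
  then show "var_idx v < Max (insert 0 (var_idx ` (\<Union>m\<in>Poly_Mapping.keys f. Poly_Mapping.keys m))) + 1"
    by simp
qed

lemma vars_below_mono: "vars_below N f \<Longrightarrow> N \<le> M \<Longrightarrow> vars_below M f"
  unfolding vars_below_def by fastforce

lemma bnd_le_iff_vars_below: "1 \<le> N \<Longrightarrow> bnd f \<le> N \<longleftrightarrow> vars_below N f"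
proof
  assume "bnd f \<le> N"
  then show "vars_below N f" by (rule vars_below_mono[OF vars_below_bnd])
next
  assume "1 \<le> N" "vars_below N f"
  then have "Max (insert 0 (var_idx ` (\<Union>m\<in>Poly_Mapping.keys f. Poly_Mapping.keys m))) \<le> N - 1"
    unfolding vars_below_def by (subst Max_le_iff) fastforce+
  then show "bnd f \<le> N" using \<open>1 \<le> N\<close> unfolding bnd_def by linarith
qed

lemma vars_below_add: "vars_below N f \<Longrightarrow> vars_below N g \<Longrightarrow> vars_below N (f + g)"
  unfolding vars_below_def using keys_add[of f g] by blast

lemma vars_below_mult: "vars_below N f \<Longrightarrow> vars_below N g \<Longrightarrow> vars_below N (f * g)"
proof -
  have keys_add_exp: "Poly_Mapping.keys (a + b) = Poly_Mapping.keys a \<union> Poly_Mapping.keys b"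
    for a b :: "var \<Rightarrow>\<^sub>0 nat"
    by (auto simp: in_keys_iff lookup_add)
  show "vars_below N f \<Longrightarrow> vars_below N g \<Longrightarrow> vars_below N (f * g)"
    unfolding vars_below_def using keys_mult[of f g] by (fastforce simp: keys_add_exp)
qed

lemma vars_below_const [simp]: "vars_below N (const c)"
  unfolding vars_below_def const_def by simp

lemma vars_below_var_poly: "var_idx v < N \<Longrightarrow> vars_below N (var_poly v)"
  unfolding vars_below_def var_poly_def by simp

lemma vars_below_pderiv_var: "vars_below N f \<Longrightarrow> vars_below N (pderiv_var v f)"
proof -
  have "Poly_Mapping.keys (a - b) \<subseteq> Poly_Mapping.keys a" for a b :: "var \<Rightarrow>\<^sub>0 nat"
    by (auto simp: in_keys_iff lookup_minus)
  then show "vars_below N f \<Longrightarrow> vars_below N (pderiv_var v f)"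
    unfolding vars_below_def pderiv_var_def
    by (auto dest!: subsetD[OF keys_sum] split: if_splits) blast
qed

lemma pderiv_var_eq_0: "vars_below N f \<Longrightarrow> N \<le> var_idx v \<Longrightarrow> pderiv_var v f = 0"
  unfolding pderiv_var_def vars_below_def
  by (intro sum.neutral ballI) (metis in_keys_iff leD mult_eq_0_iff of_nat_0 single_zero)

lemma pderiv_var_eq_0_bnd: "bnd f \<le> var_idx v \<Longrightarrow> pderiv_var v f = 0"
  using pderiv_var_eq_0[OF vars_below_bnd] .

lemma pderiv_var_pderiv_var_eq_0_bnd:
  "bnd f \<le> var_idx v \<or> bnd f \<le> var_idx w \<Longrightarrow> pderiv_var v (pderiv_var w f) = 0"
  using pderiv_var_eq_0[OF vars_below_pderiv_var[OF vars_below_bnd]] pderiv_var_eq_0_bnd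
  by fastforce

lemma bnd_var_poly_mult: "bnd g \<le> N \<Longrightarrow> var_idx v < N \<Longrightarrow> bnd (var_poly v * g) \<le> N"
  using bnd_le_iff_vars_below vars_below_mult vars_below_var_poly by auto

section \<open>Truncated operators\<close>

lemma sum_atLeastAtMost_truncate:
  fixes M N a :: nat
  assumes "M \<le> N" "\<And>i. M < i \<Longrightarrow> i \<le> N \<Longrightarrow> F i = 0"
  shows "sum F {a..N} = sum F {a..M}"
  by (rule sum.mono_neutral_right) (use assms in auto)

lemma double_sum_atLeastAtMost_truncate:
  fixes M N a c :: nat
  assumes "M \<le> N" "\<And>i j. M < i \<Longrightarrow> F i j = 0" "\<And>i j. M < j \<Longrightarrow> F i j = 0"
  shows "(\<Sum>i\<in>{a..N}. \<Sum>j\<in>{c..N}. F i j) = (\<Sum>i\<in>{a..M}. \<Sum>j\<in>{c..M}. F i j)"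
  using assms by (simp add: sum_atLeastAtMost_truncate[of M N])

abbreviation b_poly :: mpoly where "b_poly \<equiv> const bb"

definition Theta_trunc :: "nat \<Rightarrow> mpoly \<Rightarrow> mpoly" where
  "Theta_trunc N f = (\<Sum>i\<in>{1..N}. pp i * dY i f)"

definition Y_plus_trunc :: "nat \<Rightarrow> mpoly \<Rightarrow> mpoly" where
  "Y_plus_trunc N f = (\<Sum>i\<in>{0..N}. yy (i+1) * dY i f)"

definition Lambda_trunc :: "nat \<Rightarrow> mpoly \<Rightarrow> mpoly" where
  "Lambda_trunc N f =
     (1 + b_poly) * (\<Sum>i\<in>{1..N}. \<Sum>j\<in>{1..N}. of_nat i * yy (i+j-1) * dP i (dY (j-1) f))
   + (\<Sum>i\<in>{1..N}. \<Sum>j\<in>{1..N}. yy (i-1) * pp j * dY (i+j-1) f)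
   + b_poly * (\<Sum>i\<in>{0..N}. of_nat i * yy i * dY i f)"

definition join_trunc :: "nat \<Rightarrow> mpoly \<Rightarrow> mpoly" where
  "join_trunc N f = (\<Sum>i\<in>{1..N}. \<Sum>j\<in>{1..N}. of_nat (i*j) * pp (i+j) * dP i (dP j f))"

definition cut_trunc :: "nat \<Rightarrow> mpoly \<Rightarrow> mpoly" where
  "cut_trunc N f = (\<Sum>i\<in>{1..N}. \<Sum>j\<in>{1..N}. of_nat (i+j) * pp i * pp j * dP (i+j) f)"

definition weight_trunc :: "nat \<Rightarrow> mpoly \<Rightarrow> mpoly" where
  "weight_trunc N f = (\<Sum>i\<in>{1..N}. of_nat (i*(i-1)) * pp i * dP i f)"

definition D2_trunc :: "nat \<Rightarrow> mpoly \<Rightarrow> mpoly" where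
  "D2_trunc N f = (1 + b_poly) * join_trunc N f + cut_trunc N f + b_poly * weight_trunc N f"

definition D'2_trunc :: "nat \<Rightarrow> mpoly \<Rightarrow> mpoly" where
  "D'2_trunc N f =
     (1 + b_poly) * (\<Sum>i\<in>{1..N}. \<Sum>j\<in>{1..N}. of_nat (2*i*j) * yy (i+j) * dY i (dP j f))
   + (\<Sum>i\<in>{1..N}. \<Sum>j\<in>{1..N}. of_nat (2*i) * yy i * pp j * dY (i+j) f)
   + b_poly * (\<Sum>i\<in>{1..N}. of_nat (i*(i-1)) * yy i * dY i f)"

definition D2 :: "mpoly \<Rightarrow> mpoly" where "D2 f = D2_trunc (bnd f) f"
definition D'2 :: "mpoly \<Rightarrow> mpoly" where "D'2 f = D'2_trunc (bnd f) f"
definition E2 :: "mpoly \<Rightarrow> mpoly" where "E2 f = D2 f + D'2 f"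

lemma D_alpha_eq: "D_alpha f = const (1/2) * D2 f"
  by (simp add: D_alpha_def D2_def D2_trunc_def join_trunc_def cut_trunc_def weight_trunc_def
      const_add)

lemma D'_alpha_eq: "D'_alpha f = const (1/2) * D'2 f"
  by (simp add: D'_alpha_def D'2_def D'2_trunc_def const_add)

lemma D_alpha_plus_D'_alpha: "D_alpha f + D'_alpha f = const (1/2) * E2 f"
  by (simp add: D_alpha_eq D'_alpha_eq E2_def distrib_left)

lemmas truncate_intros = arg_cong2[where f="(+)"] arg_cong2[where f="(*)"] refl
  double_sum_atLeastAtMost_truncate sum_atLeastAtMost_truncate

lemmas pderiv_eq_0_bnd = pderiv_var_eq_0_bnd pderiv_var_pderiv_var_eq_0_bnd

lemma Theta_trunc_eq: "bnd f \<le> N \<Longrightarrow> Theta_trunc N f = Theta_Y f"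
  unfolding Theta_Y_def Theta_trunc_def by (intro truncate_intros) (auto simp: pderiv_eq_0_bnd)

lemma Y_plus_trunc_eq: "bnd f \<le> N \<Longrightarrow> Y_plus_trunc N f = Y_plus f"
  unfolding Y_plus_def Y_plus_trunc_def by (intro truncate_intros) (auto simp: pderiv_eq_0_bnd)

lemma Lambda_trunc_eq: "bnd f \<le> N \<Longrightarrow> Lambda_trunc N f = Lambda_Y f"
  unfolding Lambda_Y_def Lambda_trunc_def const_add const_one
  by (intro truncate_intros) (auto simp: pderiv_eq_0_bnd)

lemma D2_trunc_eq: "bnd f \<le> N \<Longrightarrow> D2_trunc N f = D2 f"
  unfolding D2_def D2_trunc_def join_trunc_def cut_trunc_def weight_trunc_def
  by (intro truncate_intros) (auto simp: pderiv_eq_0_bnd)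

lemma D'2_trunc_eq: "bnd f \<le> N \<Longrightarrow> D'2_trunc N f = D'2 f"
  unfolding D'2_def D'2_trunc_def by (intro truncate_intros) (auto simp: pderiv_eq_0_bnd)

definition linear_op :: "(mpoly \<Rightarrow> mpoly) \<Rightarrow> bool" where
  "linear_op A \<longleftrightarrow> (\<forall>f g. A (f + g) = A f + A g) \<and> (\<forall>c f. A (const c * f) = const c * A f)"

lemma linear_op_add: "linear_op A \<Longrightarrow> A (f + g) = A f + A g"
  by (simp add: linear_op_def)

lemma linear_op_const_mult: "linear_op A \<Longrightarrow> A (const c * f) = const c * A f"
  by (simp add: linear_op_def)

lemma linear_op_zero: "linear_op A \<Longrightarrow> A 0 = 0"
  using linear_op_add[of A 0 0] by simp

lemma linear_op_sum: "linear_op A \<Longrightarrow> A (\<Sum>i\<in>I. F i) = (\<Sum>i\<in>I. A (F i))"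
  by (induction I rule: infinite_finite_induct) (auto simp: linear_op_zero linear_op_add)

lemma linear_op_of_nat_mult: "linear_op A \<Longrightarrow> A (of_nat n * f) = of_nat n * A f"
  by (simp add: of_nat_eq_const linear_op_const_mult)

lemma linear_op_pderiv_var: "linear_op (pderiv_var v)"
  by (simp add: linear_op_def pderiv_var_add pderiv_var_const_mult)

lemma linear_op_compose: "linear_op A \<Longrightarrow> linear_op B \<Longrightarrow> linear_op (\<lambda>f. A (B f))"
  by (simp add: linear_op_def)

lemma linear_op_pderiv_var_pderiv_var: "linear_op (\<lambda>f. pderiv_var v (pderiv_var w f))"
  by (simp add: linear_op_def pderiv_var_add pderiv_var_const_mult)

lemma linear_op_mult_left: "linear_op A \<Longrightarrow> linear_op (\<lambda>f. h * A f)"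
  unfolding linear_op_def by (metis distrib_left mult.left_commute)

lemma linear_op_plus: "linear_op A \<Longrightarrow> linear_op B \<Longrightarrow> linear_op (\<lambda>f. A f + B f)"
  by (simp add: linear_op_def distrib_left add_ac)

lemma linear_op_sum_ops: "(\<And>i. linear_op (A i)) \<Longrightarrow> linear_op (\<lambda>f. \<Sum>i\<in>I. A i f)"
  unfolding linear_op_def by (simp add: sum.distrib sum_distrib_left)

lemma linear_op_of_trunc:
  assumes trunc: "\<And>f N. bnd f \<le> N \<Longrightarrow> A N f = B f" and lin: "\<And>N. linear_op (A N)"
  shows "linear_op B"
  unfolding linear_op_def
proof (intro conjI allI)
  fix f g
  let ?N = "max (bnd f) (bnd g)"
  have "vars_below ?N f" "vars_below ?N g"
    using vars_below_bnd vars_below_mono max.cobounded1 max.cobounded2 by metis+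
  then have "bnd (f + g) \<le> ?N"
    using bnd_le_iff_vars_below[of ?N] one_le_bnd[of f] vars_below_add by auto
  then show "B (f + g) = B f + B g"
    using trunc[of _ ?N] linear_op_add[OF lin] by (metis max.cobounded1 max.cobounded2)
next
  fix c f
  have "bnd (const c * f) \<le> bnd f"
    using bnd_le_iff_vars_below[OF one_le_bnd] vars_below_mult vars_below_bnd by auto
  then show "B (const c * f) = const c * B f"
    using trunc[of _ "bnd f"] linear_op_const_mult[OF lin] by (metis order_refl)
qed

lemmas linear_op_intros =
  linear_op_plus linear_op_sum_ops linear_op_mult_left linear_op_pderiv_var
  linear_op_pderiv_var_pderiv_var

lemma linear_op_Theta_Y: "linear_op Theta_Y"
  by (rule linear_op_of_trunc[where A = Theta_trunc], erule Theta_trunc_eq)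
     (unfold Theta_trunc_def[abs_def], intro linear_op_intros)

lemma linear_op_Y_plus: "linear_op Y_plus"
  by (rule linear_op_of_trunc[where A = Y_plus_trunc], erule Y_plus_trunc_eq)
     (unfold Y_plus_trunc_def[abs_def], intro linear_op_intros)

lemma linear_op_Lambda_Y: "linear_op Lambda_Y"
  by (rule linear_op_of_trunc[where A = Lambda_trunc], erule Lambda_trunc_eq)
     (unfold Lambda_trunc_def[abs_def], intro linear_op_intros)

lemma linear_op_D2: "linear_op D2"
  by (rule linear_op_of_trunc[where A = D2_trunc], erule D2_trunc_eq)
     (unfold D2_trunc_def[abs_def] join_trunc_def cut_trunc_def weight_trunc_def,
      intro linear_op_intros)

lemma linear_op_D'2: "linear_op D'2"
  by (rule linear_op_of_trunc[where A = D'2_trunc], erule D'2_trunc_eq)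
     (unfold D'2_trunc_def[abs_def], intro linear_op_intros)

lemma linear_op_E2: "linear_op E2"
  unfolding E2_def[abs_def] using linear_op_D2 linear_op_D'2 by (rule linear_op_plus)

section \<open>Polynomials free of the y-variables\<close>

definition yfree :: "mpoly \<Rightarrow> bool" where
  "yfree f \<longleftrightarrow> (\<forall>k. dY k f = 0)"

lemma yfree_dY [simp]: "yfree g \<Longrightarrow> dY k g = 0"
  by (simp add: yfree_def)

lemma yfree_add: "yfree f \<Longrightarrow> yfree g \<Longrightarrow> yfree (f + g)"
  by (simp add: yfree_def pderiv_var_add)

lemma yfree_mult: "yfree f \<Longrightarrow> yfree g \<Longrightarrow> yfree (f * g)"
  by (simp add: yfree_def pderiv_var_mult)

lemma yfree_const [simp]: "yfree (const c)"
  by (simp add: yfree_def)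

lemma yfree_of_nat [simp]: "yfree (of_nat n)"
  by (simp add: yfree_def)

lemma yfree_one [simp]: "yfree 1"
  by (simp add: yfree_def)

lemma yfree_pp [simp]: "yfree (pp i)"
  by (simp add: yfree_def)

lemma yfree_dP: "yfree f \<Longrightarrow> yfree (dP i f)"
  by (simp add: yfree_def pderiv_var_commute[of "Y _"])

lemma yfree_single: "(\<And>k. Poly_Mapping.lookup m (Y k) = 0) \<Longrightarrow> yfree (Poly_Mapping.single m c)"
  by (simp add: yfree_def pderiv_var_single)

lemma PY_key_cases:
  assumes "f \<in> PY" "m \<in> Poly_Mapping.keys f"
  obtains "\<And>k. Poly_Mapping.lookup m (Y k) = 0"
    | k where "Poly_Mapping.lookup m (Y k) = 1" "\<And>j. j \<noteq> k \<Longrightarrow> Poly_Mapping.lookup m (Y j) = 0"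
proof -
  let ?S = "Poly_Mapping.keys m \<inter> range Y"
  have S1: "(\<Sum>v\<in>?S. Poly_Mapping.lookup m v) \<le> 1" using assms unfolding PY_def by auto
  have le_S: "(\<Sum>v\<in>A. Poly_Mapping.lookup m v) \<le> 1" if "A \<subseteq> ?S" for A
    using sum_mono2[OF _ that, of "Poly_Mapping.lookup m"] S1
    by (meson finite_Int finite_keys le_trans zero_le)
  show thesis
  proof (cases "\<forall>k. Poly_Mapping.lookup m (Y k) = 0")
    case False
    then obtain k where k: "Poly_Mapping.lookup m (Y k) \<noteq> 0" by auto
    then have "Poly_Mapping.lookup m (Y k) = 1" using le_S[of "{Y k}"] by (simp add: in_keys_iff)
    moreover have "Poly_Mapping.lookup m (Y j) = 0" if "j \<noteq> k" for j
      using le_S[of "{Y k, Y j}"] k that by (auto simp: in_keys_iff)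
    ultimately show thesis by (rule that(2))
  qed (use that(1) in blast)
qed

lemma single_eq_yy_mult:
  assumes "Poly_Mapping.lookup m (Y k) = 1" "\<And>j. j \<noteq> k \<Longrightarrow> Poly_Mapping.lookup m (Y j) = 0"
  shows "Poly_Mapping.single m c = yy k * Poly_Mapping.single (m - unit_mon (Y k)) c"
    and "yfree (Poly_Mapping.single (m - unit_mon (Y k)) c)"
proof -
  have "unit_mon (Y k) + (m - unit_mon (Y k)) = m"
    using assms(1) by (intro poly_mapping_eqI) (auto simp: lookup_add lookup_minus lookup_single when_def)
  then show "Poly_Mapping.single m c = yy k * Poly_Mapping.single (m - unit_mon (Y k)) c"
    by (simp add: var_poly_def mult_single)
  show "yfree (Poly_Mapping.single (m - unit_mon (Y k)) c)"
    by (rule yfree_single) (use assms in \<open>auto simp: lookup_minus lookup_single when_def\<close>)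
qed

lemma PY_linear_op_eqI:
  assumes "f \<in> PY" and "linear_op A" "linear_op B"
    and yfree_eq: "\<And>g. yfree g \<Longrightarrow> A g = B g"
    and yy_mult_eq: "\<And>g k. yfree g \<Longrightarrow> A (yy k * g) = B (yy k * g)"
  shows "A f = B f"
proof -
  have "A (Poly_Mapping.single m (Poly_Mapping.lookup f m)) = B (Poly_Mapping.single m (Poly_Mapping.lookup f m))"
    if "m \<in> Poly_Mapping.keys f" for m
    using assms(1) that
  proof (cases rule: PY_key_cases)
    case 1
    then show ?thesis by (intro yfree_eq yfree_single)
  next
    case (2 k)
    then show ?thesis using single_eq_yy_mult[OF 2] yy_mult_eq by metis
  qed
  then show ?thesis
    by (subst (1 2) poly_mapping_sum_single)
       (simp add: linear_op_sum[OF assms(2)] linear_op_sum[OF assms(3)])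
qed

lemma Lambda_Y_yfree: "yfree g \<Longrightarrow> Lambda_Y g = 0"
  by (simp add: Lambda_Y_def)

lemma Y_plus_yfree: "yfree g \<Longrightarrow> Y_plus g = 0"
  by (simp add: Y_plus_def)

lemma Theta_Y_yfree: "yfree g \<Longrightarrow> Theta_Y g = 0"
  by (simp add: Theta_Y_def)

lemma D'2_yfree: "yfree g \<Longrightarrow> D'2 g = 0"
  by (simp add: D'2_def D'2_trunc_def pderiv_var_commute[of "Y _"])

lemma yfree_D2: "yfree g \<Longrightarrow> yfree (D2 g)"
proof -
  have "dY k (D2_trunc N f) = D2_trunc N (dY k f)" for k N f
    by (simp add: D2_trunc_def join_trunc_def cut_trunc_def weight_trunc_def pderiv_var_sum
        pderiv_var_mult pderiv_var_add pderiv_var_const_mult pderiv_var_commute[of "Y k"]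
        del: of_nat_mult of_nat_add)
  moreover have "D2_trunc N 0 = 0" for N
    by (simp add: D2_trunc_def join_trunc_def cut_trunc_def weight_trunc_def)
  ultimately show "yfree g \<Longrightarrow> yfree (D2 g)"
    by (simp add: yfree_def D2_def)
qed

lemma dY_yy_mult: "yfree g \<Longrightarrow> dY j (yy k * g) = (if j = k then g else 0)"
  by (simp add: pderiv_var_mult)

lemma bnd_yy_mult: "k + bnd g \<le> N \<Longrightarrow> bnd (yy k * g) \<le> N"
  using one_le_bnd[of g] by (intro bnd_var_poly_mult) auto

lemma Theta_Y_yy_mult:
  assumes "yfree g" shows "Theta_Y (yy k * g) = (if 1 \<le> k then pp k * g else 0)"
proof -
  have "Theta_Y (yy k * g) = Theta_trunc (k + bnd g) (yy k * g)"
    by (rule Theta_trunc_eq[symmetric], rule bnd_yy_mult) simp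
  then show ?thesis
    using assms one_le_bnd[of g] by (simp add: Theta_trunc_def dY_yy_mult mult_if_zero sum.delta')
qed

lemma Y_plus_yy_mult:
  assumes "yfree g" shows "Y_plus (yy k * g) = yy (k+1) * g"
proof -
  have "Y_plus (yy k * g) = Y_plus_trunc (k + bnd g) (yy k * g)"
    by (rule Y_plus_trunc_eq[symmetric], rule bnd_yy_mult) simp
  then show ?thesis
    using assms by (simp add: Y_plus_trunc_def dY_yy_mult mult_if_zero sum.delta')
qed

lemma D2_yy_mult: "D2 (yy k * g) = yy k * D2 g"
proof -
  let ?N = "k + bnd g"
  have "D2 (yy k * g) = D2_trunc ?N (yy k * g)"
    by (rule D2_trunc_eq[symmetric], rule bnd_yy_mult) simp
  also have "\<dots> = yy k * D2_trunc ?N g"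
    unfolding D2_trunc_def join_trunc_def cut_trunc_def weight_trunc_def
    by (simp add: pderiv_var_mult sum_distrib_left algebra_simps del: of_nat_mult of_nat_add)
  also have "D2_trunc ?N g = D2 g"
    by (rule D2_trunc_eq) simp
  finally show ?thesis .
qed

section \<open>Matrix entries of the operators on the y-linear part\<close>

definition Lambda_entry :: "nat \<Rightarrow> nat \<Rightarrow> mpoly \<Rightarrow> mpoly" where
  "Lambda_entry m k g =
     (if k < m then (1 + b_poly) * of_nat (m-k) * dP (m-k) g
      else if m < k then pp (k-m) * g
      else b_poly * of_nat k * g)"

definition E_entry :: "nat \<Rightarrow> nat \<Rightarrow> mpoly \<Rightarrow> mpoly" where
  "E_entry m k g =
     (if k < m then (1 + b_poly) * of_nat (2*k*(m-k)) * dP (m-k) g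
      else if m < k then of_nat (2*m) * pp (k-m) * g
      else D2 g + b_poly * of_nat (k*(k-1)) * g)"

lemma Lambda_Y_yy_mult_expand:
  assumes g: "yfree g" and N: "k + bnd g \<le> N"
  shows "Lambda_Y (yy k * g) = (1 + b_poly) * (\<Sum>i\<in>{1..N}. of_nat i * yy (i+k) * dP i g)
     + (\<Sum>m\<in>{0..<k}. yy m * pp (k-m) * g) + b_poly * (of_nat k * yy k * g)"
proof -
  have k1N: "k + 1 \<le> N" using N one_le_bnd[of g] by simp
  have "Lambda_Y (yy k * g) = Lambda_trunc N (yy k * g)"
    by (rule Lambda_trunc_eq[symmetric], rule bnd_yy_mult[OF N])
  also have "\<dots> = (1 + b_poly) * (\<Sum>i\<in>{1..N}. \<Sum>j\<in>{1..N}.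
         if j - 1 = k then of_nat i * yy (i+j-1) * dP i g else 0)
   + (\<Sum>i\<in>{1..N}. \<Sum>j\<in>{1..N}. if i + j - 1 = k then yy (i-1) * pp j * g else 0)
   + b_poly * (\<Sum>i\<in>{0..N}. if i = k then of_nat i * yy i * g else 0)"
  proof -
    have "dP i (if b then x else 0) = (if b then dP i x else 0)" for i b x
      by simp
    then show ?thesis
      unfolding Lambda_trunc_def using g by (simp only: dY_yy_mult mult_if_zero)
  qed
  also have "(\<Sum>i\<in>{1..N}. \<Sum>j\<in>{1..N}. if j - 1 = k then of_nat i * yy (i+j-1) * dP i g else 0)
      = (\<Sum>i\<in>{1..N}. of_nat i * yy (i+k) * dP i g)"
    using k1N by (intro sum.cong refl, subst sum_if_unique[where a = "k+1"]) auto
  also have "(\<Sum>i\<in>{1..N}. \<Sum>j\<in>{1..N}. if i + j - 1 = k then yy (i-1) * pp j * g else 0)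
      = (\<Sum>i\<in>{1..<k+1}. yy (i-1) * pp (k+1-i) * g)"
    using k1N by (intro double_sum_antidiagonal) auto
  also have "\<dots> = (\<Sum>m\<in>{0..<k}. yy m * pp (k-m) * g)"
    by (simp add: sum_lessThan_shift_up atLeastLessThanSuc_atLeastAtMost)
  also have "(\<Sum>i\<in>{0..N}. if i = k then of_nat i * yy i * g else 0) = of_nat k * yy k * g"
    using N by (simp add: sum.delta')
  finally show ?thesis .
qed

lemma D'2_yy_mult_expand:
  assumes g: "yfree g" and N: "k + bnd g \<le> N"
  shows "D'2 (yy k * g) =
     (1 + b_poly) * (\<Sum>j\<in>{1..N}. of_nat (2*k*j) * yy (k+j) * dP j g)
   + (\<Sum>i\<in>{1..<k}. of_nat (2*i) * yy i * pp (k-i) * g)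
   + b_poly * (of_nat (k*(k-1)) * yy k * g)"
proof -
  have "D'2 (yy k * g) = D'2_trunc N (yy k * g)"
    by (rule D'2_trunc_eq[symmetric], rule bnd_yy_mult[OF N])
  also have "\<dots> =
       (1 + b_poly) * (\<Sum>i\<in>{1..N}. \<Sum>j\<in>{1..N}.
           if i = k then of_nat (2*i*j) * yy (i+j) * dP j g else 0)
     + (\<Sum>i\<in>{1..N}. \<Sum>j\<in>{1..N}. if i + j = k then of_nat (2*i) * yy i * pp j * g else 0)
     + b_poly * (\<Sum>i\<in>{1..N}. if i = k then of_nat (i*(i-1)) * yy i * g else 0)"
  proof -
    have "dY i (dP j (yy k * g)) = (if i = k then dP j g else 0)" for i j
      using g by (simp add: pderiv_var_mult dY_yy_mult yfree_dP)
    then show ?thesis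
      unfolding D'2_trunc_def using g by (simp only: dY_yy_mult mult_if_zero)
  qed
  also have "(\<Sum>i\<in>{1..N}. \<Sum>j\<in>{1..N}. if i = k then of_nat (2*i*j) * yy (i+j) * dP j g else 0)
     = (\<Sum>j\<in>{1..N}. of_nat (2*k*j) * yy (k+j) * dP j g)"
    using N by (subst sum.swap) (cases "k = 0"; simp add: sum.delta')
  also have "(\<Sum>i\<in>{1..N}. \<Sum>j\<in>{1..N}. if i + j = k then of_nat (2*i) * yy i * pp j * g else 0)
     = (\<Sum>i\<in>{1..<k}. of_nat (2*i) * yy i * pp (k-i) * g)"
    using N by (intro double_sum_antidiagonal) auto
  also have "(\<Sum>i\<in>{1..N}. if i = k then of_nat (i*(i-1)) * yy i * g else 0)
      = of_nat (k*(k-1)) * yy k * g"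
    using N by (cases "k = 0") (simp_all add: sum.delta')
  finally show ?thesis .
qed

lemma Lambda_Y_yy_mult:
  assumes g: "yfree g" and N: "k + bnd g \<le> N"
  shows "Lambda_Y (yy k * g) = (\<Sum>m\<in>{0..N}. yy m * Lambda_entry m k g)"
proof -
  have kN: "k \<le> N" using N by simp
  have "(\<Sum>m\<in>{0..<k}. yy m * Lambda_entry m k g) = (\<Sum>m\<in>{0..<k}. yy m * pp (k-m) * g)"
    by (auto simp: Lambda_entry_def mult_ac intro!: sum.cong)
  moreover have "(\<Sum>m\<in>{Suc k..N}. yy m * Lambda_entry m k g)
      = (\<Sum>j\<in>{1..N-k}. (1 + b_poly) * (of_nat j * yy (j+k) * dP j g))"
    unfolding sum_atLeastAtMost_Suc_shift[OF kN] by (rule sum.cong) (auto simp: Lambda_entry_def mult_ac)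
  moreover have "\<dots> = (1 + b_poly) * (\<Sum>j\<in>{1..N}. of_nat j * yy (j+k) * dP j g)"
    unfolding sum_distrib_left
    by (rule sum_atLeastAtMost_truncate[symmetric]) (use N in \<open>auto simp: pderiv_var_eq_0_bnd\<close>)
  ultimately show ?thesis
    unfolding Lambda_Y_yy_mult_expand[OF g N] sum_atLeastAtMost_split_at[OF kN]
    by (simp add: Lambda_entry_def mult_ac)
qed

lemma E2_yy_mult:
  assumes g: "yfree g" and N: "k + bnd g \<le> N"
  shows "E2 (yy k * g) = (\<Sum>m\<in>{0..N}. yy m * E_entry m k g)"
proof -
  have kN: "k \<le> N" using N by simp
  have "(\<Sum>m\<in>{0..<k}. yy m * E_entry m k g) = (\<Sum>i\<in>{1..<k}. of_nat (2*i) * yy i * pp (k-i) * g)"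
    by (subst sum_atLeastLessThan_drop_zero) (auto simp: E_entry_def mult_ac intro!: sum.cong)
  moreover have "(\<Sum>m\<in>{Suc k..N}. yy m * E_entry m k g)
      = (\<Sum>j\<in>{1..N-k}. (1 + b_poly) * (of_nat (2*k*j) * yy (k+j) * dP j g))"
    unfolding sum_atLeastAtMost_Suc_shift[OF kN] by (rule sum.cong) (auto simp: E_entry_def algebra_simps)
  moreover have "\<dots> = (1 + b_poly) * (\<Sum>j\<in>{1..N}. of_nat (2*k*j) * yy (k+j) * dP j g)"
    unfolding sum_distrib_left
    by (rule sum_atLeastAtMost_truncate[symmetric]) (use N in \<open>auto simp: pderiv_var_eq_0_bnd\<close>)
  ultimately show ?thesis
    unfolding E2_def D2_yy_mult D'2_yy_mult_expand[OF g N] sum_atLeastAtMost_split_at[OF kN]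
    by (simp add: E_entry_def algebra_simps)
qed

section \<open>Commutators of D2 with multiplication by and differentiation in a p-variable\<close>

lemma join_trunc_pp_mult:
  assumes "1 \<le> d" "d \<le> N"
  shows "join_trunc N (pp d * h) =
    pp d * join_trunc N h + 2 * (\<Sum>i\<in>{1..N}. of_nat (i*d) * pp (i+d) * dP i h)"
proof -
  have "dP i (dP j (pp d * h)) =
      (if j = d then dP i h else 0) + (if i = d then dP j h else 0) + pp d * dP i (dP j h)" for i j
    by (simp add: pderiv_var_mult pderiv_var_add)
  then have "join_trunc N (pp d * h) =
      (\<Sum>i\<in>{1..N}. \<Sum>j\<in>{1..N}. if j = d then of_nat (i*j) * pp (i+j) * dP i h else 0)
    + (\<Sum>i\<in>{1..N}. \<Sum>j\<in>{1..N}. if i = d then of_nat (i*j) * pp (i+j) * dP j h else 0)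
    + pp d * join_trunc N h"
    unfolding join_trunc_def
    by (simp only: distrib_left mult_if_zero sum.distrib sum_distrib_left mult.left_commute[of "pp d"])
  also have "\<dots> = pp d * join_trunc N h
      + ((\<Sum>i\<in>{1..N}. of_nat (i*d) * pp (i+d) * dP i h) + (\<Sum>j\<in>{1..N}. of_nat (d*j) * pp (d+j) * dP j h))"
    using assms by (simp add: sum.delta' double_sum_if_fst_eq)
  finally show ?thesis
    by (simp only: mult.commute[of d] add.commute[of d] mult_2)
qed

lemma cut_trunc_pp_mult:
  assumes "1 \<le> d" "d \<le> N"
  shows "cut_trunc N (pp d * h) =
    pp d * cut_trunc N h + of_nat d * (\<Sum>i\<in>{1..<d}. pp i * pp (d-i) * h)"
proof -
  have "cut_trunc N (pp d * h) =
      (\<Sum>i\<in>{1..N}. \<Sum>j\<in>{1..N}. if i + j = d then of_nat d * (pp i * pp j * h) else 0)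
    + pp d * cut_trunc N h"
  proof -
    have "dP k (pp d * h) = (if k = d then h else 0) + pp d * dP k h" for k
      by (simp add: pderiv_var_mult)
    then show ?thesis
      unfolding cut_trunc_def
      by (simp only: distrib_left mult_if_zero sum.distrib sum_distrib_left mult.left_commute[of "pp d"])
         (auto intro!: sum.cong simp: mult_ac)
  qed
  also have "\<dots> = pp d * cut_trunc N h + of_nat d * (\<Sum>i\<in>{1..<d}. pp i * pp (d-i) * h)"
    using assms by (subst double_sum_antidiagonal) (simp_all add: sum_distrib_left mult_ac)
  finally show ?thesis .
qed

lemma weight_trunc_pp_mult:
  assumes "1 \<le> d" "d \<le> N"
  shows "weight_trunc N (pp d * h) = pp d * weight_trunc N h + of_nat (d*(d-1)) * pp d * h"
  using assms unfolding weight_trunc_def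
  by (simp add: pderiv_var_mult distrib_left sum.distrib sum_distrib_left mult_if_zero sum.delta'
      mult_ac del: of_nat_mult)

lemma dP_join_trunc:
  assumes "1 \<le> d" "d \<le> N"
  shows "dP d (join_trunc N h) =
    join_trunc N (dP d h) + (\<Sum>i\<in>{1..<d}. of_nat (i*(d-i)) * dP i (dP (d-i) h))"
proof -
  have "dP d (dP i (dP j h)) = dP i (dP j (dP d h))" for i j
    by (metis pderiv_var_commute)
  then have "dP d (join_trunc N h) =
      (\<Sum>i\<in>{1..N}. \<Sum>j\<in>{1..N}. if i + j = d then of_nat (i*j) * dP i (dP j h) else 0)
    + join_trunc N (dP d h)"
    unfolding join_trunc_def
    by (simp only: pderiv_var_sum pderiv_var_mult pderiv_var_of_nat pderiv_var_pp sum.distrib[symmetric])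
       (intro sum.cong refl, simp)
  then show ?thesis
    using assms by (subst (asm) double_sum_antidiagonal) (simp_all add: add.commute del: of_nat_mult)
qed

lemma dP_cut_trunc:
  assumes "1 \<le> d" "d \<le> N"
  shows "dP d (cut_trunc N h) =
    cut_trunc N (dP d h) + 2 * (\<Sum>j\<in>{1..N}. of_nat (d+j) * pp j * dP (d+j) h)"
proof -
  have "dP d (cut_trunc N h) =
      (\<Sum>i\<in>{1..N}. \<Sum>j\<in>{1..N}. if i = d then of_nat (i+j) * pp j * dP (i+j) h else 0)
    + (\<Sum>i\<in>{1..N}. \<Sum>j\<in>{1..N}. if j = d then of_nat (i+j) * pp i * dP (i+j) h else 0)
    + cut_trunc N (dP d h)"
    unfolding cut_trunc_def
    by (simp only: pderiv_var_sum pderiv_var_mult pderiv_var_of_nat pderiv_var_pp sum.distrib[symmetric]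
        pderiv_var_commute[of "P d"]) (intro sum.cong refl, simp)
  also have "\<dots> = cut_trunc N (dP d h)
      + ((\<Sum>j\<in>{1..N}. of_nat (d+j) * pp j * dP (d+j) h) + (\<Sum>i\<in>{1..N}. of_nat (i+d) * pp i * dP (i+d) h))"
    using assms by (simp add: sum.delta' double_sum_if_fst_eq)
  finally show ?thesis
    by (simp only: add.commute[of _ d] mult_2)
qed

lemma dP_weight_trunc:
  assumes "1 \<le> d" "d \<le> N"
  shows "dP d (weight_trunc N h) = weight_trunc N (dP d h) + of_nat (d*(d-1)) * dP d h"
proof -
  have "dP d (weight_trunc N h) =
      (\<Sum>i\<in>{1..N}. if d = i then of_nat (i*(i-1)) * dP i h else 0) + weight_trunc N (dP d h)"
    unfolding weight_trunc_def
    by (simp only: pderiv_var_sum pderiv_var_mult pderiv_var_of_nat pderiv_var_pp sum.distrib[symmetric]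
        pderiv_var_commute[of "P d"]) (intro sum.cong refl, simp)
  then show ?thesis
    using assms by (simp add: sum.delta)
qed

lemma D2_pp_mult:
  assumes "1 \<le> d" "d + bnd h \<le> N"
  shows "D2 (pp d * h) = pp d * D2 h
    + (2 * (1 + b_poly) * (\<Sum>i\<in>{1..N}. of_nat (i*d) * pp (i+d) * dP i h)
       + of_nat d * (\<Sum>i\<in>{1..<d}. pp i * pp (d-i) * h)
       + b_poly * (of_nat (d*(d-1)) * pp d * h))"
proof -
  have dN: "1 \<le> d" "d \<le> N" using assms by auto
  have "D2 (pp d * h) = D2_trunc N (pp d * h)"
    using assms one_le_bnd[of h] by (intro D2_trunc_eq[symmetric] bnd_var_poly_mult) auto
  also have "\<dots> = pp d * D2_trunc N h
    + (2 * (1 + b_poly) * (\<Sum>i\<in>{1..N}. of_nat (i*d) * pp (i+d) * dP i h)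
       + of_nat d * (\<Sum>i\<in>{1..<d}. pp i * pp (d-i) * h)
       + b_poly * (of_nat (d*(d-1)) * pp d * h))"
    unfolding D2_trunc_def join_trunc_pp_mult[OF dN] cut_trunc_pp_mult[OF dN] weight_trunc_pp_mult[OF dN]
    by (simp add: algebra_simps)
  also have "D2_trunc N h = D2 h"
    using assms by (intro D2_trunc_eq) auto
  finally show ?thesis .
qed

lemma bnd_pderiv_var: "bnd (pderiv_var v f) \<le> bnd f"
  using bnd_le_iff_vars_below[OF one_le_bnd] vars_below_pderiv_var[OF vars_below_bnd] by blast

lemma dP_D2:
  assumes "1 \<le> d" "d + bnd h \<le> N"
  shows "dP d (D2 h) = D2 (dP d h)
    + ((1 + b_poly) * (\<Sum>i\<in>{1..<d}. of_nat (i*(d-i)) * dP i (dP (d-i) h))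
       + 2 * (\<Sum>j\<in>{1..N}. of_nat (d+j) * pp j * dP (d+j) h)
       + b_poly * (of_nat (d*(d-1)) * dP d h))"
proof -
  have dN: "1 \<le> d" "d \<le> N" using assms by auto
  have "dP d (D2 h) = dP d (D2_trunc N h)"
    using assms by (simp add: D2_trunc_eq)
  also have "\<dots> = D2_trunc N (dP d h)
    + ((1 + b_poly) * (\<Sum>i\<in>{1..<d}. of_nat (i*(d-i)) * dP i (dP (d-i) h))
       + 2 * (\<Sum>j\<in>{1..N}. of_nat (d+j) * pp j * dP (d+j) h)
       + b_poly * (of_nat (d*(d-1)) * dP d h))"
    unfolding D2_trunc_def
    by (simp add: pderiv_var_add pderiv_var_mult dP_join_trunc[OF dN] dP_cut_trunc[OF dN]
        dP_weight_trunc[OF dN] algebra_simps)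
  also have "D2_trunc N (dP d h) = D2 (dP d h)"
    using assms bnd_pderiv_var[of "P d" h] by (intro D2_trunc_eq) auto
  finally show ?thesis .
qed

section \<open>The matrix identities\<close>

lemma of_nat_mult_pred: "(of_nat (n * (n - 1)) :: 'a::comm_ring_1) = of_nat n * (of_nat n - 1)"
  by (cases n) (auto simp: algebra_simps)

lemma D2_scalar_mult: "D2 (const c * of_nat n * x) = const c * of_nat n * D2 x"
  using linear_op_const_mult[OF linear_op_D2, of c "of_nat n * x"]
        linear_op_of_nat_mult[OF linear_op_D2, of n x]
  by (simp add: mult.assoc)

lemma one_plus_b_poly: "1 + b_poly = const (1 + bb)"
  by (simp add: const_add)

lemma Lambda_entry_eq_0: "k + bnd g \<le> n \<Longrightarrow> Lambda_entry n k g = 0"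
  using one_le_bnd[of g] by (auto simp: Lambda_entry_def pderiv_var_eq_0_bnd)

lemma E_entry_eq_0: "k + bnd g \<le> n \<Longrightarrow> E_entry n k g = 0"
  using one_le_bnd[of g] by (auto simp: E_entry_def pderiv_var_eq_0_bnd)

lemma Lambda_entry_zero [simp]: "Lambda_entry m k 0 = 0"
  by (simp add: Lambda_entry_def)

lemma E_entry_zero [simp]: "E_entry m k 0 = 0"
  by (simp add: E_entry_def linear_op_zero[OF linear_op_D2])

lemma yfree_Lambda_entry: "yfree g \<Longrightarrow> yfree (Lambda_entry m k g)"
  by (simp add: Lambda_entry_def yfree_mult yfree_add yfree_dP del: of_nat_mult of_nat_diff)

lemma yfree_E_entry: "yfree g \<Longrightarrow> yfree (E_entry m k g)"
  by (simp add: E_entry_def yfree_D2 yfree_mult yfree_add yfree_dP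
      del: of_nat_mult of_nat_add of_nat_diff)

lemma E_entry_Suc_Suc: "E_entry (Suc m) (Suc k) g = E_entry m k g + 2 * Lambda_entry m k g"
proof (cases m k rule: linorder_cases)
  case less
  then show ?thesis
    by (simp add: E_entry_def Lambda_entry_def del: of_nat_mult of_nat_add of_nat_diff)
       (simp add: algebra_simps)
next
  case equal
  then show ?thesis
    by (simp add: E_entry_def Lambda_entry_def of_nat_mult_pred del: of_nat_mult of_nat_add of_nat_diff)
       (simp add: algebra_simps)
next
  case greater
  then obtain d where "m = k + d" by (metis less_imp_add_positive)
  then show ?thesis using greater
    by (simp add: E_entry_def Lambda_entry_def del: of_nat_mult of_nat_add of_nat_diff)
       (simp add: algebra_simps)
qed

lemma entry_products_commute_below:
  assumes "n < k" "n < m"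
  shows "E_entry m n (Lambda_entry n k g) = Lambda_entry m n (E_entry n k g)"
proof -
  have "m - n = k - n \<longleftrightarrow> m = k" using assms by auto
  then show ?thesis using assms
    by (simp add: E_entry_def Lambda_entry_def pderiv_var_mult algebra_simps
        del: of_nat_mult of_nat_add of_nat_diff) (simp add: algebra_simps)
qed

lemma entry_products_commute_diagonal:
  "E_entry k n (Lambda_entry n k g) = Lambda_entry k n (E_entry n k g)"
proof (cases n k rule: linorder_cases)
  case less
  then show ?thesis by (intro entry_products_commute_below)
next
  case equal
  then show ?thesis
    using D2_scalar_mult[of bb k g]
    by (simp add: E_entry_def Lambda_entry_def del: of_nat_mult of_nat_add of_nat_diff)
       (simp add: algebra_simps)
next
  case greater
  then show ?thesis
    by (simp add: E_entry_def Lambda_entry_def pderiv_var_mult algebra_simps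
        del: of_nat_mult of_nat_add of_nat_diff) (simp add: algebra_simps)
qed

lemma entry_products_between_gt:
  assumes "0 < i" "i < d"
  shows "E_entry (k+d) (k+i) (Lambda_entry (k+i) k g) = Lambda_entry (k+d) (k+i) (E_entry (k+i) k g)
    + (1 + b_poly) * (1 + b_poly) * (2 * (of_nat (i*i*(d-i)) * dP i (dP (d-i) g)))"
proof -
  obtain e where e: "d = i + e" "0 < e" using assms by (metis less_imp_add_positive)
  have "dP e (dP i g) = dP i (dP e g)" by (rule pderiv_var_commute)
  then show ?thesis using assms e
    by (simp add: E_entry_def Lambda_entry_def pderiv_var_mult pderiv_var_add
        del: of_nat_mult of_nat_add of_nat_diff) (simp add: algebra_simps)
qed

lemma entry_products_above_gt:
  assumes "0 < j"
  shows "E_entry (k+d) (k+d+j) (Lambda_entry (k+d+j) k g) = Lambda_entry (k+d) (k+d+j) (E_entry (k+d+j) k g)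
    + (1 + b_poly) * 2 * of_nat d * (of_nat (d+j) * pp j * dP (d+j) g)"
  using assms
  by (simp add: E_entry_def Lambda_entry_def del: of_nat_mult of_nat_add of_nat_diff)
     (simp add: algebra_simps)

lemma entry_products_between_lt:
  assumes "0 < i" "i < d"
  shows "Lambda_entry m (m+i) (E_entry (m+i) (m+d) g) = E_entry m (m+i) (Lambda_entry (m+i) (m+d) g)
    + 2 * (of_nat i * (pp i * pp (d-i) * g))"
proof -
  obtain e where e: "d = i + e" "0 < e" using assms by (metis less_imp_add_positive)
  then have "d - i = e" by simp
  then show ?thesis using assms e
    by (simp add: E_entry_def Lambda_entry_def del: of_nat_mult of_nat_add of_nat_diff)
       (simp add: algebra_simps)
qed

lemma entry_products_above_lt:
  assumes "0 < j"
  shows "Lambda_entry m (m+d+j) (E_entry (m+d+j) (m+d) g) = E_entry m (m+d+j) (Lambda_entry (m+d+j) (m+d) g)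
    + (1 + b_poly) * 2 * (of_nat (j*d) * pp (j+d) * dP j g)"
  using assms
  by (simp add: E_entry_def Lambda_entry_def del: of_nat_mult of_nat_add of_nat_diff)
     (simp add: algebra_simps)

lemma sum_entry_products_between_gt:
  "(\<Sum>i\<in>{1..<d}. E_entry (k+d) (k+i) (Lambda_entry (k+i) k g))
   = (\<Sum>i\<in>{1..<d}. Lambda_entry (k+d) (k+i) (E_entry (k+i) k g))
     + (1 + b_poly) * (1 + b_poly) * (of_nat d * (\<Sum>i\<in>{1..<d}. of_nat (i*(d-i)) * dP i (dP (d-i) g)))"
proof -
  have "(\<Sum>i\<in>{1..<d}. E_entry (k+d) (k+i) (Lambda_entry (k+i) k g))
   = (\<Sum>i\<in>{1..<d}. Lambda_entry (k+d) (k+i) (E_entry (k+i) k g))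
     + (1 + b_poly) * (1 + b_poly) * (2 * (\<Sum>i\<in>{1..<d}. of_nat (i*i*(d-i)) * dP i (dP (d-i) g)))"
    by (simp only: sum_distrib_left sum.distrib[symmetric])
       (intro sum.cong refl, simp add: entry_products_between_gt)
  also have "2 * (\<Sum>i\<in>{1..<d}. of_nat (i*i*(d-i)) * dP i (dP (d-i) g))
      = of_nat d * (\<Sum>i\<in>{1..<d}. of_nat (i*(d-i)) * dP i (dP (d-i) g))"
  proof (rule sum_symmetrize)
    fix i assume "0 < i" "i < d"
    then obtain e where "d = i + e" by (metis less_imp_add_positive)
    then show "i*i*(d-i) + (d-i)*(d-i)*(d-(d-i)) = d*(i*(d-i))"
      by (simp add: algebra_simps)
  qed (simp add: pderiv_var_commute)
  finally show ?thesis .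
qed

lemma sum_entry_products_above_gt:
  assumes "k + d + bnd g \<le> N"
  shows "(\<Sum>j\<in>{1..N-(k+d)}. E_entry (k+d) (k+d+j) (Lambda_entry (k+d+j) k g))
   = (\<Sum>j\<in>{1..N-(k+d)}. Lambda_entry (k+d) (k+d+j) (E_entry (k+d+j) k g))
     + (1 + b_poly) * 2 * of_nat d * (\<Sum>j\<in>{1..N}. of_nat (d+j) * pp j * dP (d+j) g)"
proof -
  have "(\<Sum>j\<in>{1..N-(k+d)}. of_nat (d+j) * pp j * dP (d+j) g) = (\<Sum>j\<in>{1..N}. of_nat (d+j) * pp j * dP (d+j) g)"
    by (rule sum_atLeastAtMost_truncate[symmetric]) (use assms in \<open>auto simp: pderiv_var_eq_0_bnd\<close>)
  moreover have "(\<Sum>j\<in>{1..N-(k+d)}. E_entry (k+d) (k+d+j) (Lambda_entry (k+d+j) k g))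
   = (\<Sum>j\<in>{1..N-(k+d)}. Lambda_entry (k+d) (k+d+j) (E_entry (k+d+j) k g))
     + (1 + b_poly) * 2 * of_nat d * (\<Sum>j\<in>{1..N-(k+d)}. of_nat (d+j) * pp j * dP (d+j) g)"
    by (simp only: sum_distrib_left sum.distrib[symmetric])
       (intro sum.cong refl, simp add: entry_products_above_gt)
  ultimately show ?thesis by simp
qed

lemma sum_entry_products_between_lt:
  "(\<Sum>i\<in>{1..<d}. Lambda_entry m (m+i) (E_entry (m+i) (m+d) g))
   = (\<Sum>i\<in>{1..<d}. E_entry m (m+i) (Lambda_entry (m+i) (m+d) g))
     + of_nat d * (\<Sum>i\<in>{1..<d}. pp i * pp (d-i) * g)"
proof -
  have "(\<Sum>i\<in>{1..<d}. Lambda_entry m (m+i) (E_entry (m+i) (m+d) g))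
   = (\<Sum>i\<in>{1..<d}. E_entry m (m+i) (Lambda_entry (m+i) (m+d) g))
     + 2 * (\<Sum>i\<in>{1..<d}. of_nat i * (pp i * pp (d-i) * g))"
    by (simp only: sum_distrib_left sum.distrib[symmetric])
       (intro sum.cong refl, simp add: entry_products_between_lt)
  also have "2 * (\<Sum>i\<in>{1..<d}. of_nat i * (pp i * pp (d-i) * g))
      = of_nat d * (\<Sum>i\<in>{1..<d}. of_nat 1 * (pp i * pp (d-i) * g))"
    by (rule sum_symmetrize) (simp_all add: mult_ac)
  finally show ?thesis by simp
qed

lemma sum_entry_products_above_lt:
  assumes "m + d + bnd g \<le> N"
  shows "(\<Sum>j\<in>{1..N-(m+d)}. Lambda_entry m (m+d+j) (E_entry (m+d+j) (m+d) g))
   = (\<Sum>j\<in>{1..N-(m+d)}. E_entry m (m+d+j) (Lambda_entry (m+d+j) (m+d) g))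
     + (1 + b_poly) * 2 * (\<Sum>j\<in>{1..N}. of_nat (j*d) * pp (j+d) * dP j g)"
proof -
  have "(\<Sum>j\<in>{1..N-(m+d)}. of_nat (j*d) * pp (j+d) * dP j g) = (\<Sum>j\<in>{1..N}. of_nat (j*d) * pp (j+d) * dP j g)"
    by (rule sum_atLeastAtMost_truncate[symmetric]) (use assms in \<open>auto simp: pderiv_var_eq_0_bnd\<close>)
  moreover have "(\<Sum>j\<in>{1..N-(m+d)}. Lambda_entry m (m+d+j) (E_entry (m+d+j) (m+d) g))
   = (\<Sum>j\<in>{1..N-(m+d)}. E_entry m (m+d+j) (Lambda_entry (m+d+j) (m+d) g))
     + (1 + b_poly) * 2 * (\<Sum>j\<in>{1..N-(m+d)}. of_nat (j*d) * pp (j+d) * dP j g)"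
    by (simp only: sum_distrib_left sum.distrib[symmetric])
       (intro sum.cong refl, simp add: entry_products_above_lt)
  ultimately show ?thesis by simp
qed

lemma entry_products_commute_gt:
  assumes d: "1 \<le> d" and N: "k + d + bnd g + 1 \<le> N"
  shows "(\<Sum>n\<in>{0..N}. E_entry (k+d) n (Lambda_entry n k g))
       = (\<Sum>n\<in>{0..N}. Lambda_entry (k+d) n (E_entry n k g))"
proof -
  have kN: "0 < d" "k + d \<le> N" and N': "k + d + bnd g \<le> N" using d N by auto
  define A where "A = dP d g"
  define Q where "Q = (\<Sum>i\<in>{1..<d}. of_nat (i*(d-i)) * dP i (dP (d-i) g))"
  define H where "H = (\<Sum>j\<in>{1..N}. of_nat (d+j) * pp j * dP (d+j) g)"
  have lo: "(\<Sum>n\<in>{0..<k}. E_entry (k+d) n (Lambda_entry n k g))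
      = (\<Sum>n\<in>{0..<k}. Lambda_entry (k+d) n (E_entry n k g))"
    by (intro sum.cong refl entry_products_commute_below) auto
  have Lk: "E_entry (k+d) k (Lambda_entry k k g) = (1 + b_poly) * of_nat (2*k*d) * (b_poly * of_nat k * A)"
    using d by (simp add: E_entry_def Lambda_entry_def pderiv_var_mult A_def
        del: of_nat_mult of_nat_add of_nat_diff)
  have Lm: "E_entry (k+d) (k+d) (Lambda_entry (k+d) k g)
      = (1 + b_poly) * of_nat d * D2 A + b_poly * of_nat ((k+d)*(k+d-1)) * ((1 + b_poly) * of_nat d * A)"
    using d D2_scalar_mult[of "1 + bb" d A]
    by (simp add: E_entry_def Lambda_entry_def one_plus_b_poly A_def
        del: of_nat_mult of_nat_add of_nat_diff)
  have Rk: "Lambda_entry (k+d) k (E_entry k k g) = (1 + b_poly) * of_nat d *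
      (D2 A + ((1 + b_poly) * Q + 2 * H + b_poly * (of_nat (d*(d-1)) * A)) + b_poly * of_nat (k*(k-1)) * A)"
    using d dP_D2[OF d, of g N] N
    by (simp add: E_entry_def Lambda_entry_def pderiv_var_mult pderiv_var_add Q_def H_def A_def
        del: of_nat_mult of_nat_add of_nat_diff)
  have Rm: "Lambda_entry (k+d) (k+d) (E_entry (k+d) k g)
      = b_poly * of_nat (k+d) * ((1 + b_poly) * of_nat (2*k*d) * A)"
    using d by (simp add: E_entry_def Lambda_entry_def A_def del: of_nat_mult of_nat_add of_nat_diff)
  show ?thesis
    unfolding sum_atLeastAtMost_split_at_two[OF kN] lo Lk Lm Rk Rm sum_entry_products_between_gt
      sum_entry_products_above_gt[OF N'] Q_def[symmetric] H_def[symmetric]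
    by (simp only: of_nat_mult_pred) (simp add: algebra_simps)
qed

lemma entry_products_commute_lt:
  assumes d: "1 \<le> d" and N: "m + d + bnd g + 1 \<le> N"
  shows "(\<Sum>n\<in>{0..N}. E_entry m n (Lambda_entry n (m+d) g))
       = (\<Sum>n\<in>{0..N}. Lambda_entry m n (E_entry n (m+d) g))"
proof -
  have mN: "0 < d" "m + d \<le> N" and N': "m + d + bnd g \<le> N" using d N by auto
  define X where "X = pp d * g"
  define G where "G = (\<Sum>i\<in>{1..N}. of_nat (i*d) * pp (i+d) * dP i g)"
  define P where "P = (\<Sum>i\<in>{1..<d}. pp i * pp (d-i) * g)"
  have lo: "(\<Sum>n\<in>{0..<m}. E_entry m n (Lambda_entry n (m+d) g))
      = (\<Sum>n\<in>{0..<m}. Lambda_entry m n (E_entry n (m+d) g))"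
    by (intro sum.cong refl entry_products_commute_below) auto
  have Lm: "E_entry m m (Lambda_entry m (m+d) g) = pp d * D2 g
      + (2 * (1 + b_poly) * G + of_nat d * P + b_poly * (of_nat (d*(d-1)) * X)) + b_poly * of_nat (m*(m-1)) * X"
    using d D2_pp_mult[OF d, of g N] N
    by (simp add: E_entry_def Lambda_entry_def G_def P_def X_def del: of_nat_mult of_nat_add of_nat_diff)
  have Rm: "Lambda_entry m m (E_entry m (m+d) g) = b_poly * of_nat m * (of_nat (2*m) * X)"
    using d by (simp add: E_entry_def Lambda_entry_def X_def del: of_nat_mult of_nat_add of_nat_diff)
  have Lk: "E_entry m (m+d) (Lambda_entry (m+d) (m+d) g) = of_nat (2*m) * (b_poly * of_nat (m+d) * X)"
    using d by (simp add: E_entry_def Lambda_entry_def X_def del: of_nat_mult of_nat_add of_nat_diff)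
  have Rk: "Lambda_entry m (m+d) (E_entry (m+d) (m+d) g) = pp d * D2 g + b_poly * of_nat ((m+d)*(m+d-1)) * X"
    using d by (simp add: E_entry_def Lambda_entry_def X_def del: of_nat_mult of_nat_add of_nat_diff)
      (simp add: algebra_simps)
  show ?thesis
    unfolding sum_atLeastAtMost_split_at_two[OF mN] lo Lm Rm Lk Rk sum_entry_products_between_lt
      sum_entry_products_above_lt[OF N'] G_def[symmetric] P_def[symmetric]
    by (simp only: of_nat_mult_pred) (simp add: algebra_simps)
qed

lemma entry_products_commute:
  assumes N: "k + bnd g \<le> N"
  shows "(\<Sum>n\<in>{0..N}. E_entry m n (Lambda_entry n k g)) = (\<Sum>n\<in>{0..N}. Lambda_entry m n (E_entry n k g))"
proof -
  let ?M = "N + m + k + bnd g + 1"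
  have "(\<Sum>n\<in>{0..?M}. E_entry m n (Lambda_entry n k g)) = (\<Sum>n\<in>{0..?M}. Lambda_entry m n (E_entry n k g))"
  proof (cases m k rule: linorder_cases)
    case less
    define d where "d = k - m"
    have k: "k = m + d" and d: "1 \<le> d" using less by (auto simp: d_def)
    show ?thesis unfolding k by (rule entry_products_commute_lt[OF d]) simp
  next
    case equal
    then show ?thesis by (simp add: entry_products_commute_diagonal)
  next
    case greater
    define d where "d = m - k"
    have m: "m = k + d" and d: "1 \<le> d" using greater by (auto simp: d_def)
    show ?thesis unfolding m by (rule entry_products_commute_gt[OF d]) simp
  qed
  moreover have "(\<Sum>n\<in>{0..?M}. E_entry m n (Lambda_entry n k g)) = (\<Sum>n\<in>{0..N}. E_entry m n (Lambda_entry n k g))"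
    by (rule sum_atLeastAtMost_truncate) (use N in \<open>auto simp: Lambda_entry_eq_0\<close>)
  moreover have "(\<Sum>n\<in>{0..?M}. Lambda_entry m n (E_entry n k g)) = (\<Sum>n\<in>{0..N}. Lambda_entry m n (E_entry n k g))"
    by (rule sum_atLeastAtMost_truncate) (use N in \<open>auto simp: E_entry_eq_0\<close>)
  ultimately show ?thesis by simp
qed

lemma E2_Lambda_Y_yy_mult:
  assumes g: "yfree g"
  shows "E2 (Lambda_Y (yy k * g)) = Lambda_Y (E2 (yy k * g))"
proof -
  define N where "N = k + bnd g"
  define M where "M = N + Max ((\<lambda>n. bnd (Lambda_entry n k g) + bnd (E_entry n k g)) ` {0..N})"
  have bound_Lambda: "n + bnd (Lambda_entry n k g) \<le> M" and bound_E: "n + bnd (E_entry n k g) \<le> M"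
    if "n \<in> {0..N}" for n
  proof -
    have "bnd (Lambda_entry n k g) + bnd (E_entry n k g)
        \<le> Max ((\<lambda>n. bnd (Lambda_entry n k g) + bnd (E_entry n k g)) ` {0..N})"
      using that by (intro Max_ge) auto
    moreover have "n \<le> N" using that by simp
    ultimately show "n + bnd (Lambda_entry n k g) \<le> M" "n + bnd (E_entry n k g) \<le> M"
      unfolding M_def by linarith+
  qed
  have "E2 (Lambda_Y (yy k * g)) = (\<Sum>n\<in>{0..N}. E2 (yy n * Lambda_entry n k g))"
    unfolding N_def by (simp add: Lambda_Y_yy_mult[OF g order_refl] linear_op_sum[OF linear_op_E2])
  also have "\<dots> = (\<Sum>n\<in>{0..N}. \<Sum>m\<in>{0..M}. yy m * E_entry m n (Lambda_entry n k g))"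
    by (intro sum.cong refl E2_yy_mult yfree_Lambda_entry g bound_Lambda)
  also have "\<dots> = (\<Sum>m\<in>{0..M}. yy m * (\<Sum>n\<in>{0..N}. E_entry m n (Lambda_entry n k g)))"
    by (subst sum.swap) (simp add: sum_distrib_left)
  also have "\<dots> = (\<Sum>m\<in>{0..M}. yy m * (\<Sum>n\<in>{0..N}. Lambda_entry m n (E_entry n k g)))"
    by (simp add: entry_products_commute N_def)
  also have "\<dots> = (\<Sum>n\<in>{0..N}. \<Sum>m\<in>{0..M}. yy m * Lambda_entry m n (E_entry n k g))"
    by (subst sum.swap) (simp add: sum_distrib_left)
  also have "\<dots> = (\<Sum>n\<in>{0..N}. Lambda_Y (yy n * E_entry n k g))"
    by (intro sum.cong refl Lambda_Y_yy_mult[symmetric] yfree_E_entry g bound_E)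
  also have "\<dots> = Lambda_Y (E2 (yy k * g))"
    unfolding N_def by (simp add: E2_yy_mult[OF g order_refl] linear_op_sum[OF linear_op_Lambda_Y])
  finally show ?thesis .
qed

lemma E2_Y_plus_yy_mult:
  assumes g: "yfree g"
  shows "E2 (Y_plus (yy k * g)) = Y_plus (E2 (yy k * g)) + 2 * Y_plus (Lambda_Y (yy k * g))"
proof -
  define N where "N = k + bnd g"
  have N: "k + bnd g \<le> N" and N': "Suc k + bnd g \<le> Suc N" by (simp_all add: N_def)
  have "E2 (Y_plus (yy k * g)) = (\<Sum>m\<in>{0..Suc N}. yy m * E_entry m (Suc k) g)"
    using E2_yy_mult[OF g N'] by (simp add: Y_plus_yy_mult[OF g])
  also have "\<dots> = (\<Sum>m\<in>{0..N}. yy (m+1) * E_entry (Suc m) (Suc k) g)"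
    by (subst sum.atLeast0_atMost_Suc_shift) (simp add: E_entry_def)
  also have "\<dots> = (\<Sum>m\<in>{0..N}. yy (m+1) * E_entry m k g) + 2 * (\<Sum>m\<in>{0..N}. yy (m+1) * Lambda_entry m k g)"
    by (simp add: E_entry_Suc_Suc distrib_left sum.distrib sum_distrib_left mult.left_commute)
  also have "(\<Sum>m\<in>{0..N}. yy (m+1) * E_entry m k g) = Y_plus (E2 (yy k * g))"
    by (simp add: E2_yy_mult[OF g N] linear_op_sum[OF linear_op_Y_plus] Y_plus_yy_mult yfree_E_entry[OF g])
  also have "(\<Sum>m\<in>{0..N}. yy (m+1) * Lambda_entry m k g) = Y_plus (Lambda_Y (yy k * g))"
    by (simp add: Lambda_Y_yy_mult[OF g N] linear_op_sum[OF linear_op_Y_plus] Y_plus_yy_mult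
        yfree_Lambda_entry[OF g])
  finally show ?thesis .
qed

lemma Theta_Y_E2_yy_mult_expand:
  assumes g: "yfree g" and k: "1 \<le> k" and N: "k + bnd g \<le> N"
  shows "Theta_Y (E2 (yy k * g)) = pp k * D2 g
    + (2 * (1 + b_poly) * (\<Sum>i\<in>{1..N}. of_nat (i*k) * pp (i+k) * dP i g)
       + of_nat k * (\<Sum>i\<in>{1..<k}. pp i * pp (k-i) * g)
       + b_poly * (of_nat (k*(k-1)) * pp k * g))"
proof -
  have kN: "k \<le> N" using N by simp
  let ?F = "\<lambda>m. if 1 \<le> m then pp m * E_entry m k g else 0"
  have "Theta_Y (E2 (yy k * g)) = (\<Sum>m\<in>{0..N}. ?F m)"
    by (simp add: E2_yy_mult[OF g N] linear_op_sum[OF linear_op_Theta_Y] Theta_Y_yy_mult yfree_E_entry[OF g])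
  moreover have "(\<Sum>m\<in>{0..<k}. ?F m) = of_nat k * (\<Sum>i\<in>{1..<k}. pp i * pp (k-i) * g)"
  proof -
    have "(\<Sum>m\<in>{0..<k}. ?F m) = 2 * (\<Sum>m\<in>{1..<k}. of_nat m * (pp m * pp (k-m) * g))"
      by (subst sum_atLeastLessThan_drop_zero) (simp_all add: sum_distrib_left E_entry_def mult_ac)
    also have "\<dots> = of_nat k * (\<Sum>i\<in>{1..<k}. of_nat 1 * (pp i * pp (k-i) * g))"
      by (rule sum_symmetrize) (simp_all add: mult_ac)
    finally show ?thesis by simp
  qed
  moreover have "(\<Sum>m\<in>{Suc k..N}. ?F m) = 2 * (1 + b_poly) * (\<Sum>i\<in>{1..N}. of_nat (i*k) * pp (i+k) * dP i g)"
  proof -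
    have "(\<Sum>m\<in>{Suc k..N}. ?F m) = 2 * (1 + b_poly) * (\<Sum>j\<in>{1..N-k}. of_nat (j*k) * pp (j+k) * dP j g)"
      unfolding sum_atLeastAtMost_Suc_shift[OF kN] sum_distrib_left
      by (rule sum.cong) (auto simp: E_entry_def algebra_simps)
    also have "(\<Sum>j\<in>{1..N-k}. of_nat (j*k) * pp (j+k) * dP j g) = (\<Sum>i\<in>{1..N}. of_nat (i*k) * pp (i+k) * dP i g)"
      by (rule sum_atLeastAtMost_truncate[symmetric]) (use N in \<open>auto simp: pderiv_var_eq_0_bnd\<close>)
    finally show ?thesis .
  qed
  moreover have "?F k = pp k * D2 g + b_poly * (of_nat (k*(k-1)) * pp k * g)"
    using k by (simp add: E_entry_def algebra_simps del: of_nat_mult of_nat_diff)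
  ultimately show ?thesis
    unfolding sum_atLeastAtMost_split_at[OF kN] by (simp add: algebra_simps)
qed

lemma Theta_Y_E2_yy_mult:
  assumes g: "yfree g"
  shows "Theta_Y (E2 (yy k * g)) = D2 (Theta_Y (yy k * g))"
proof (cases "k = 0")
  case True
  have "Theta_Y (E2 (yy 0 * g)) = 0"
    by (simp add: E2_yy_mult[OF g order_refl] linear_op_sum[OF linear_op_Theta_Y] Theta_Y_yy_mult
        yfree_E_entry[OF g]) (auto simp: E_entry_def intro!: sum.neutral)
  then show ?thesis
    using True by (simp add: Theta_Y_yy_mult[OF g] linear_op_zero[OF linear_op_D2])
next
  case False
  then show ?thesis
    by (simp add: Theta_Y_yy_mult[OF g] Theta_Y_E2_yy_mult_expand[OF g _ order_refl]
        D2_pp_mult[OF _ order_refl])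
qed

lemma E2_Lambda_Y:
  assumes "f \<in> PY" shows "E2 (Lambda_Y f) = Lambda_Y (E2 f)"
proof (rule PY_linear_op_eqI[OF assms])
  show "linear_op (\<lambda>f. E2 (Lambda_Y f))" "linear_op (\<lambda>f. Lambda_Y (E2 f))"
    by (simp_all add: linear_op_compose linear_op_E2 linear_op_Lambda_Y)
  show "E2 (Lambda_Y g) = Lambda_Y (E2 g)" if "yfree g" for g
    using that by (simp add: E2_def Lambda_Y_yfree D'2_yfree yfree_D2 linear_op_zero[OF linear_op_D2]
        linear_op_zero[OF linear_op_D'2])
  show "E2 (Lambda_Y (yy k * g)) = Lambda_Y (E2 (yy k * g))" if "yfree g" for g k
    using that by (rule E2_Lambda_Y_yy_mult)
qed

lemma E2_Y_plus:
  assumes "f \<in> PY" shows "E2 (Y_plus f) = Y_plus (E2 f) + 2 * Y_plus (Lambda_Y f)"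
proof (rule PY_linear_op_eqI[OF assms])
  show "linear_op (\<lambda>f. E2 (Y_plus f))" "linear_op (\<lambda>f. Y_plus (E2 f) + 2 * Y_plus (Lambda_Y f))"
    by (simp_all add: linear_op_compose linear_op_plus linear_op_mult_left linear_op_E2 linear_op_Y_plus
        linear_op_Lambda_Y)
  show "E2 (Y_plus g) = Y_plus (E2 g) + 2 * Y_plus (Lambda_Y g)" if "yfree g" for g
    using that by (simp add: E2_def Y_plus_yfree Lambda_Y_yfree D'2_yfree yfree_D2
        linear_op_zero[OF linear_op_D2] linear_op_zero[OF linear_op_D'2] linear_op_zero[OF linear_op_Y_plus])
  show "E2 (Y_plus (yy k * g)) = Y_plus (E2 (yy k * g)) + 2 * Y_plus (Lambda_Y (yy k * g))"
    if "yfree g" for g k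
    using that by (rule E2_Y_plus_yy_mult)
qed

lemma Theta_Y_E2:
  assumes "f \<in> PY" shows "Theta_Y (E2 f) = D2 (Theta_Y f)"
proof (rule PY_linear_op_eqI[OF assms])
  show "linear_op (\<lambda>f. Theta_Y (E2 f))" "linear_op (\<lambda>f. D2 (Theta_Y f))"
    by (simp_all add: linear_op_compose linear_op_Theta_Y linear_op_E2 linear_op_D2)
  show "Theta_Y (E2 g) = D2 (Theta_Y g)" if "yfree g" for g
    using that by (simp add: E2_def Theta_Y_yfree D'2_yfree yfree_D2 linear_op_zero[OF linear_op_D2])
  show "Theta_Y (E2 (yy k * g)) = D2 (Theta_Y (yy k * g))" if "yfree g" for g k
    using that by (rule Theta_Y_E2_yy_mult)
qed

lemma const_half_mult_two: "const (1/2) * (2 * x) = x"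
proof -
  have "const 2 = (2 :: mpoly)"
    by (simp add: const_def)
  then have "const (1/2) * (2 :: mpoly) = const (1/2 * 2)"
    by (subst const_mult) simp
  then show ?thesis by (simp add: mult.assoc[symmetric])
qed

theorem lemma4p13:
  fixes f :: mpoly
  assumes "f \<in> PY"
  shows "commutator (\<lambda>g. D_alpha g + D'_alpha g) Lambda_Y f = 0
       \<and> commutator (\<lambda>g. D_alpha g + D'_alpha g) Y_plus f = Y_plus (Lambda_Y f)
       \<and> Theta_Y (D_alpha f + D'_alpha f) = D_alpha (Theta_Y f)"
  unfolding commutator_def D_alpha_plus_D'_alpha
  using E2_Lambda_Y[OF assms] E2_Y_plus[OF assms] Theta_Y_E2[OF assms]
  by (simp add: linear_op_const_mult linear_op_Lambda_Y linear_op_Y_plus linear_op_Theta_Y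
      D_alpha_eq distrib_left const_half_mult_two)

end
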